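(* Suppose $r_0(-\infty):=\lim_{x\to-\infty}r_0(x)\in\mathbb R$ exists and there are $\beta\in\mathbb R$ and $\varepsilon>0$ with $\operatorname{sgn}\big(r_0'(\beta)(r_0(\beta)+r_0(-\infty))\big)=+1$, $$\operatorname{sgn}\big(r_0'(\beta)r_0(\beta)\big)=+1,\qquad |r_0(\beta)+r_0(x)|>\varepsilon\quad\text{for every }x\le\beta .$$ Then $$t^\ast(\beta)\le\frac{1}{\sqrt{k(2r_0(\beta))}\,|r_0'(\beta)|\,\gamma_2^-(\beta)},\qquad \gamma_2^-(\beta):=\min\Big\{|f(\eta)|:\ \eta\in\big[\varepsilon,\ \sup_{x\le\beta}|r_0(\beta)+r_0(x)|\big]\Big\}.$$
   Context: Let $Q(\xi):=\sqrt{1+\xi^2}$, $L(u):=\tfrac12(u\sqrt{1+u^2}+\operatorname{arcsinh}u)$, $k(\eta):=Q(L^{-1}(-\eta/2))$, $f(\eta):=k'(\eta)/\sqrt{k(\eta)}$. Given $w_0\in\mathcal C^2(\mathbb R)$ with $w_0'$ bounded and non-constant, $r_0:=-L(w_0')$, $\ell_0:=-r_0$. System (D): $r_{,t}+k(r-\ell)r_{,x}=0$, $\ell_{,t}-k(r-\ell)\ell_{,x}=0$, $r(0,\cdot)=r_0$, $\ell(0,\cdot)=\ell_0$, maximal $\mathcal C^1$ existence interval $[0,t_* )$. Backward characteristics $x_2(t,\beta)$: $\partial_tx_2=-k((r-\ell)(t,x_2))$, $x_2(0,\beta)=\beta$, compression ratio $c_2:=\partial x_2/\partial\beta$; $t^\ast(\beta)$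 is the time at which $c_2(\cdot,\beta)$ vanishes, and $t_*\le t^\ast(\beta)$. *)

theory Defs
  imports "HOL-Analysis.Analysis"
begin

definition Qf :: "real \<Rightarrow> real" where
  "Qf \<xi> = sqrt (1 + \<xi>^2)"

definition Lf :: "real \<Rightarrow> real" where
  "Lf u = (u * sqrt (1 + u^2) + arsinh u) / 2"

text \<open>k(eta) = Q(L^{-1}(-eta/2)); L is a strictly increasing bijection of the reals.\<close>
definition kf :: "real \<Rightarrow> real" where
  "kf \<eta> = Qf (inv Lf (- \<eta> / 2))"

definition ff :: "real \<Rightarrow> real" where
  "ff \<eta> = deriv kf \<eta> / sqrt (kf \<eta>)"

text \<open>Initial Riemann invariant r0 = - L(w0').\<close>
definition r0f :: "(real \<Rightarrow> real) \<Rightarrow> real \<Rightarrow> real" where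
  "r0f w1 x = - Lf (w1 x)"

definition C1_partials :: "real \<Rightarrow> (real \<Rightarrow> real \<Rightarrow> real) \<Rightarrow> (real \<Rightarrow> real \<Rightarrow> real)
    \<Rightarrow> (real \<Rightarrow> real \<Rightarrow> real) \<Rightarrow> bool" where
  "C1_partials T u ut ux \<longleftrightarrow>
     (\<forall>t\<in>{0..<T}. \<forall>x. ((\<lambda>p. u (fst p) (snd p)) has_derivative
          (\<lambda>h. ut t x * fst h + ux t x * snd h)) (at (t, x) within ({0..<T} \<times> UNIV)))
     \<and> continuous_on ({0..<T} \<times> UNIV) (\<lambda>p. ut (fst p) (snd p))
     \<and> continuous_on ({0..<T} \<times> UNIV) (\<lambda>p. ux (fst p) (snd p))"

definition solves_D :: "real \<Rightarrow> (real \<Rightarrow> real) \<Rightarrow> (real \<Rightarrow> real \<Rightarrow> real) \<Rightarrow> (real \<Rightarrow> real \<Rightarrow> real) \<Rightarrow> bool" where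
  "solves_D T r0 r l \<longleftrightarrow>
     (\<exists>rt rx lt lx. C1_partials T r rt rx \<and> C1_partials T l lt lx \<and>
        (\<forall>t\<in>{0..<T}. \<forall>x. rt t x + kf (r t x - l t x) * rx t x = 0) \<and>
        (\<forall>t\<in>{0..<T}. \<forall>x. lt t x - kf (r t x - l t x) * lx t x = 0)) \<and>
     (\<forall>x. r 0 x = r0 x) \<and> (\<forall>x. l 0 x = - r0 x)"

definition backward_char :: "real \<Rightarrow> (real \<Rightarrow> real \<Rightarrow> real) \<Rightarrow> (real \<Rightarrow> real \<Rightarrow> real)
    \<Rightarrow> (real \<Rightarrow> real \<Rightarrow> real) \<Rightarrow> (real \<Rightarrow> real \<Rightarrow> real) \<Rightarrow> bool" where
  "backward_char T r l x2 c2 \<longleftrightarrow>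
     (\<forall>b. x2 0 b = b) \<and>
     (\<forall>b. \<forall>t\<in>{0..<T}. ((\<lambda>s. x2 s b) has_real_derivative
          (- kf (r t (x2 t b) - l t (x2 t b)))) (at t within {0..<T})) \<and>
     (\<forall>t\<in>{0..<T}. \<forall>b. ((\<lambda>b'. x2 t b') has_real_derivative c2 t b) (at b))"

end

(* Along the backward characteristic x2(., beta) the invariant l is transported, so
   l(t, x2(t, b)) = - r0(b); differentiating in b gives l_x(t, x2(t, beta)) c2(t, beta) = - r0'(beta).
   A comparison principle for the transport equation of r keeps r(t, x2(t, beta)) within the range
   of r0 on (-oo, beta], so eta = r - l = r + r0(beta) along the characteristic keeps the sign of
   r0(beta) and |eta| stays in [eps, S]. The compression ratio solves the linearised equation
   c2' = - k'(eta) (r_x - l_x) c2, and together with eta' = - 2 k(eta) r_x this makes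
   Phi = c2 / sqrt(k(eta)) satisfy Phi' = - f(eta) r0'(beta) <= - gamma |r0'(beta)|. As
   Phi(0) = 1 / sqrt(k(2 r0(beta))), Phi and hence c2 vanish before Phi(0) / (gamma |r0'(beta)|). *)

theory Submission
  imports Defs
begin

section \<open>The functions L, k and f\<close>

lemma Lf_has_real_derivative: "(Lf has_real_derivative sqrt (1 + u\<^sup>2)) (at u)"
proof -
  have pos: "0 < 1 + u\<^sup>2"
    by (simp add: add_pos_nonneg)
  have "(Lf has_real_derivative
      (sqrt (1 + u\<^sup>2) + u * (inverse (sqrt (1 + u\<^sup>2)) / 2 * (2 * u)) + 1 / sqrt (u\<^sup>2 + 1)) / 2) (at u)"
    unfolding Lf_def[abs_def]
    using pos by (auto intro!: derivative_eq_intros arsinh_real_has_field_derivative)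
  also have "(sqrt (1 + u\<^sup>2) + u * (inverse (sqrt (1 + u\<^sup>2)) / 2 * (2 * u)) + 1 / sqrt (u\<^sup>2 + 1)) / 2
      = sqrt (1 + u\<^sup>2)"
    using pos real_sqrt_pow2[of "1 + u\<^sup>2"]
    by (simp add: field_simps power2_eq_square del: real_sqrt_pow2)
  finally show ?thesis .
qed

lemma strict_mono_Lf: "strict_mono Lf"
proof (rule strict_monoI)
  fix a b :: real
  assume "a < b"
  have "\<exists>y. (Lf has_real_derivative y) (at x) \<and> 0 < y" for x
  proof (intro exI conjI)
    show "(Lf has_real_derivative sqrt (1 + x\<^sup>2)) (at x)"
      by (rule Lf_has_real_derivative)
    show "0 < sqrt (1 + x\<^sup>2)"
      by (simp add: add_pos_nonneg)
  qed
  then show "Lf a < Lf b"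
    using DERIV_pos_imp_increasing[OF \<open>a < b\<close>] by blast
qed

lemma Lf_minus: "Lf (- u) = - Lf u"
  unfolding Lf_def by (simp add: field_simps)

lemma surj_Lf: "surj Lf"
proof -
  have "\<exists>u. Lf u = y" if "y \<ge> 0" for y
  proof -
    have "2 * y * 1 \<le> 2 * y * sqrt (1 + (2 * y)\<^sup>2)"
      using that by (intro mult_left_mono) auto
    moreover have "0 \<le> arsinh (2 * y)"
      using that arsinh_real_neg_iff[of "2 * y"] by linarith
    ultimately have "y \<le> Lf (2 * y)"
      unfolding Lf_def by simp
    moreover have "Lf 0 \<le> y"
      using that by (simp add: Lf_def)
    ultimately show ?thesis
      using IVT[of Lf 0 y "2 * y"] that DERIV_isCont[OF Lf_has_real_derivative] by auto
  qed
  then have "\<exists>u. Lf u = y" for y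
    by (cases "y \<ge> 0") (auto, metis Lf_minus minus_minus neg_0_le_iff_le nle_le)
  then show ?thesis
    by (metis surj_def)
qed

lemma bij_Lf: "bij Lf"
  using strict_mono_Lf surj_Lf by (simp add: bij_def strict_mono_on_imp_inj_on)

lemma Lf_inv_Lf [simp]: "Lf (inv Lf y) = y"
  by (simp add: surj_Lf surj_f_inv_f)

lemma inv_Lf_less_iff: "inv Lf a < inv Lf b \<longleftrightarrow> a < b"
  using strict_mono_less[OF strict_mono_Lf, of "inv Lf a" "inv Lf b"] by simp

lemma inv_Lf_minus: "inv Lf (- y) = - inv Lf y"
  by (metis Lf_inv_Lf Lf_minus bij_Lf bij_inv_eq_iff)

lemma inv_Lf_0: "inv Lf 0 = 0"
  using inv_Lf_minus[of 0] by simp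

lemma isCont_inv_Lf: "isCont (inv Lf) y"
  using isCont_inverse_function[where d=1 and f=Lf and g="inv Lf" and x="inv Lf y"]
    DERIV_isCont[OF Lf_has_real_derivative] bij_Lf by (simp add: bij_is_inj)

lemma inv_Lf_has_real_derivative:
  "(inv Lf has_real_derivative inverse (sqrt (1 + (inv Lf y)\<^sup>2))) (at y)"
  by (rule DERIV_inverse_function[where f=Lf and a="y - 1" and b="y + 1"])
    (use add_pos_nonneg[OF zero_less_one zero_le_power2, of "inv Lf y"] in
      \<open>auto intro: Lf_has_real_derivative isCont_inv_Lf\<close>)

(* By the chain rule, with u = L^-1(-eta/2): k' = Q'(u) u' = (u / Q(u)) (-1 / (2 Q(u))). *)
definition dkf :: "real \<Rightarrow> real" where
  "dkf \<eta> = - inv Lf (- \<eta> / 2) / (2 * (1 + (inv Lf (- \<eta> / 2))\<^sup>2))"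

lemma kf_eq: "kf \<eta> = sqrt (1 + (inv Lf (- \<eta> / 2))\<^sup>2)"
  unfolding kf_def Qf_def ..

lemma kf_has_real_derivative: "(kf has_real_derivative dkf \<eta>) (at \<eta>)"
proof -
  define u where "u = inv Lf (- \<eta> / 2)"
  have pos: "0 < 1 + u\<^sup>2"
    by (simp add: add_pos_nonneg)
  have "(kf has_real_derivative
      inverse (sqrt (1 + u\<^sup>2)) / 2 * (2 * u * (inverse (sqrt (1 + u\<^sup>2)) * (- 1 / 2)))) (at \<eta>)"
    unfolding kf_eq[abs_def] u_def
    using pos[unfolded u_def] by (auto intro!: derivative_eq_intros DERIV_chain2[OF inv_Lf_has_real_derivative])
  also have "inverse (sqrt (1 + u\<^sup>2)) / 2 * (2 * u * (inverse (sqrt (1 + u\<^sup>2)) * (- 1 / 2))) = dkf \<eta>"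
    using pos unfolding dkf_def u_def[symmetric]
    by (simp add: field_simps real_sqrt_mult[symmetric] power2_eq_square)
  finally show ?thesis .
qed

lemma kf_ge_1: "1 \<le> kf \<eta>"
  unfolding kf_eq by simp

lemma kf_minus: "kf (- \<eta>) = kf \<eta>"
  unfolding kf_eq by (simp add: inv_Lf_minus)

lemma dkf_minus: "dkf (- \<eta>) = - dkf \<eta>"
  unfolding dkf_def by (simp add: inv_Lf_minus)

lemma sgn_dkf: "sgn (dkf \<eta>) = sgn \<eta>"
proof -
  have "sgn (inv Lf (- \<eta> / 2)) = - sgn \<eta>"
    using inv_Lf_less_iff[of "- \<eta> / 2" 0] inv_Lf_less_iff[of 0 "- \<eta> / 2"]
    by (auto simp: inv_Lf_0 sgn_if)
  then show ?thesis
    unfolding dkf_def by (simp add: sgn_mult add_pos_nonneg)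
qed

lemma isCont_kf: "isCont kf \<eta>"
  using kf_has_real_derivative by (rule DERIV_isCont)

lemma isCont_dkf: "isCont dkf \<eta>"
  unfolding dkf_def[abs_def] by (intro continuous_intros isCont_o2[OF _ isCont_inv_Lf])
    (simp_all add: add_nonneg_eq_0_iff)

lemma ff_eq: "ff \<eta> = dkf \<eta> / sqrt (kf \<eta>)"
  unfolding ff_def using kf_has_real_derivative by (simp add: DERIV_imp_deriv)

lemma ff_minus: "ff (- \<eta>) = - ff \<eta>"
  unfolding ff_eq by (simp add: kf_minus dkf_minus)

lemma sgn_ff: "sgn (ff \<eta>) = sgn \<eta>"
  using kf_ge_1[of \<eta>] unfolding ff_eq by (simp add: sgn_dkf)

lemma isCont_ff: "isCont ff \<eta>"
  unfolding ff_eq[abs_def] using kf_ge_1[of \<eta>]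
  by (intro continuous_intros isCont_dkf isCont_o2[OF isCont_kf]) auto

section \<open>Continuous induction and scalar ordinary differential equations\<close>

lemma closed_real_induction:
  fixes S :: "real set"
  assumes "closed S" "a \<in> S"
    and step: "\<And>t. a \<le> t \<Longrightarrow> t < b \<Longrightarrow> {a..t} \<subseteq> S \<Longrightarrow> \<exists>h>0. {t..t + h} \<subseteq> S"
  shows "{a..b} \<subseteq> S"
proof (cases "a \<le> b")
  case True
  define A where "A = {t \<in> {a..b}. {a..t} \<subseteq> S}"
  define m where "m = Sup A"
  have "a \<in> A"
    using True assms(2) by (auto simp: A_def)
  moreover have bdd: "bdd_above A"
    by (rule bdd_aboveI[where M=b]) (auto simp: A_def)
  ultimately have m: "a \<le> m" "m \<le> b"
    unfolding m_def by (auto intro!: cSup_upper cSup_least simp: A_def)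
  have "{a..<m} \<subseteq> S"
  proof
    fix s assume s: "s \<in> {a..<m}"
    then obtain t where "t \<in> A" "s < t"
      using less_cSupD[of A s] \<open>a \<in> A\<close> unfolding m_def by auto
    then show "s \<in> S"
      using s by (auto simp: A_def)
  qed
  then have m_S: "{a..m} \<subseteq> S"
  proof (cases "a < m")
    case True
    then show ?thesis
      using \<open>{a..<m} \<subseteq> S\<close> assms(1) closure_minimal[of "{a..<m}" S] by simp
  qed (use m(1) assms(2) in auto)
  have "m = b"
  proof (rule ccontr)
    assume "m \<noteq> b"
    then obtain h where "h > 0" "{m..m + h} \<subseteq> S"
      using step[OF m(1) _ m_S] m(2) by force
    then have "{a..min (m + h) b} \<subseteq> S"
      using m_S by (meson atLeastAtMost_iff linorder_le_cases min.boundedE subset_eq)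
    then have "min (m + h) b \<in> A"
      using m \<open>h > 0\<close> by (simp add: A_def)
    then have "min (m + h) b \<le> m"
      unfolding m_def using bdd by (rule cSup_upper)
    then show False
      using \<open>h > 0\<close> \<open>m \<noteq> b\<close> m(2) by linarith
  qed
  then show ?thesis
    using m_S by simp
qed simp

lemma gronwall_abs:
  fixes d d' :: "real \<Rightarrow> real"
  assumes "0 \<le> L" "s \<in> {0..\<tau>}"
    and d: "\<And>r. r \<in> {0..\<tau>} \<Longrightarrow> (d has_real_derivative d' r) (at r within {0..\<tau>})"
    and d'_le: "\<And>r. r \<in> {0..\<tau>} \<Longrightarrow> \<bar>d' r\<bar> \<le> L * \<bar>d r\<bar>"
  shows "\<bar>d s\<bar> \<le> \<bar>d 0\<bar> * exp (L * s)"
proof -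
  define \<phi> where "\<phi> r = exp (- (2 * L * r)) * (d r)\<^sup>2" for r
  define \<phi>' where "\<phi>' r = exp (- (2 * L * r)) * (2 * d r * d' r - 2 * L * (d r)\<^sup>2)" for r
  have \<phi>': "(\<phi> has_derivative (*) (\<phi>' r)) (at r within {0..s})" if "r \<in> {0..s}" for r
  proof -
    have "(d has_real_derivative d' r) (at r within {0..s})"
      using d[of r] that assms(2) by (auto intro: has_field_derivative_subset)
    then have "(\<phi> has_real_derivative \<phi>' r) (at r within {0..s})"
      unfolding \<phi>_def \<phi>'_def
      by (auto intro!: derivative_eq_intros simp: algebra_simps power2_eq_square)
    then show ?thesis
      by (simp add: has_field_derivative_def)
  qed
  then obtain r where r: "r \<in> {0..s}" "\<phi> s - \<phi> 0 = \<phi>' r * (s - 0)"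
    using mvt_very_simple[of 0 s \<phi> "\<lambda>r. (*) (\<phi>' r)"] \<phi>' assms(2) by auto
  have "d r * d' r \<le> \<bar>d r\<bar> * \<bar>d' r\<bar>"
    by (metis abs_ge_self abs_mult)
  also have "\<dots> \<le> \<bar>d r\<bar> * (L * \<bar>d r\<bar>)"
    using d'_le[of r] r(1) assms(2) by (intro mult_left_mono) auto
  also have "\<dots> = L * (d r)\<^sup>2"
    by (simp add: power2_eq_square)
  finally have "d r * d' r \<le> L * (d r)\<^sup>2" .
  then have "\<phi>' r \<le> 0"
    unfolding \<phi>'_def by (simp add: mult_nonneg_nonpos)
  then have "\<phi> s \<le> \<phi> 0"
    using r mult_nonpos_nonneg[of "\<phi>' r" s] by simp
  then have "(d s)\<^sup>2 \<le> (d 0)\<^sup>2 * exp (2 * L * s)"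
    unfolding \<phi>_def by (simp add: exp_minus field_simps)
  also have "\<dots> = (d 0 * exp (L * s))\<^sup>2"
    by (simp add: power_mult_distrib power2_eq_square flip: exp_add)
  finally have "(d s)\<^sup>2 \<le> (d 0 * exp (L * s))\<^sup>2" .
  then show ?thesis
    using abs_le_square_iff[of "d s" "d 0 * exp (L * s)"] by (simp add: abs_mult)
qed

lemma continuous_bootstrap:
  fixes d b :: "real \<Rightarrow> real"
  assumes d: "continuous_on {0..Te} d" and b: "continuous_on {0..Te} b" "\<And>t. t \<in> {0..Te} \<Longrightarrow> b t < 1"
    and "0 \<le> Te" "\<bar>d 0\<bar> \<le> b 0"
    and bound: "\<And>t. t \<in> {0..Te} \<Longrightarrow> (\<And>r. r \<in> {0..t} \<Longrightarrow> \<bar>d r\<bar> \<le> 1) \<Longrightarrow> \<bar>d t\<bar> \<le> b t"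
  shows "{0..Te} \<subseteq> {t. \<bar>d t\<bar> \<le> b t}"
proof -
  define S where "S = {t \<in> {0..Te}. \<bar>d t\<bar> \<le> b t}"
  have "{0..Te} \<subseteq> S"
  proof (rule closed_real_induction)
    show "closed S"
      unfolding S_def by (intro continuous_on_closed_Collect_le continuous_intros d b closed_atLeastAtMost)
    show "0 \<in> S"
      using assms(4,5) by (simp add: S_def)
  next
    fix t assume t: "0 \<le> t" "t < Te" and "{0..t} \<subseteq> S"
    then have below: "\<bar>d r\<bar> < 1" if "r \<in> {0..t}" for r
      using that b(2)[of r] by (force simp: S_def)
    obtain e where "e > 0" and e: "\<And>r. r \<in> {0..Te} \<Longrightarrow> dist r t \<le> e \<Longrightarrow> dist (d r) (d t) < 1 - \<bar>d t\<bar>"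
      using continuous_onE[OF d, of t "1 - \<bar>d t\<bar>"] below[of t] t by auto
    define h where "h = min e (Te - t)"
    have "{t..t + h} \<subseteq> S"
    proof
      fix s assume s: "s \<in> {t..t + h}"
      then have "s \<in> {0..Te}"
        using t by (auto simp: h_def)
      moreover have "\<bar>d r\<bar> \<le> 1" if "r \<in> {0..s}" for r
      proof (cases "r \<le> t")
        case True
        then show ?thesis
          using below[of r] that by simp
      next
        case False
        then have "r \<in> {0..Te}" "dist r t \<le> e"
          using that s \<open>s \<in> {0..Te}\<close> by (auto simp: h_def dist_real_def)
        then show ?thesis
          using e[of r] by (simp add: dist_real_def)
      qed
      ultimately show "s \<in> S"
        using bound by (simp add: S_def)
    qed
    moreover have "h > 0"
      using \<open>e > 0\<close> t by (simp add: h_def)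
    ultimately show "\<exists>h>0. {t..t + h} \<subseteq> S"
      by blast
  qed
  then show ?thesis
    by (auto simp: S_def)
qed

lemma ode_solutions_dist_le:
  fixes X Y :: "real \<Rightarrow> real" and F :: "real \<Rightarrow> real \<Rightarrow> real"
  assumes "0 \<le> L" "s \<in> {0..Te}"
    and X: "\<And>t. t \<in> {0..Te} \<Longrightarrow> (X has_real_derivative F t (X t)) (at t within {0..Te})"
    and Y: "\<And>t. t \<in> {0..Te} \<Longrightarrow> (Y has_real_derivative F t (Y t)) (at t within {0..Te})"
    and lip: "\<And>t y. t \<in> {0..Te} \<Longrightarrow> \<bar>y - X t\<bar> \<le> 1 \<Longrightarrow> \<bar>F t y - F t (X t)\<bar> \<le> L * \<bar>y - X t\<bar>"
    and close: "\<bar>Y 0 - X 0\<bar> * exp (L * Te) < 1"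
  shows "\<bar>Y s - X s\<bar> \<le> \<bar>Y 0 - X 0\<bar> * exp (L * s)"
proof -
  define d where "d t = Y t - X t" for t
  have d: "(d has_real_derivative F t (Y t) - F t (X t)) (at t within {0..Te})" if "t \<in> {0..Te}" for t
    unfolding d_def by (rule DERIV_diff[OF Y[OF that] X[OF that]])
  have "{0..Te} \<subseteq> {t. \<bar>d t\<bar> \<le> \<bar>d 0\<bar> * exp (L * t)}"
  proof (rule continuous_bootstrap)
    show "continuous_on {0..Te} d"
      using d by (rule DERIV_continuous_on)
    show "\<bar>d 0\<bar> * exp (L * t) < 1" if "t \<in> {0..Te}" for t
    proof -
      have "exp (L * t) \<le> exp (L * Te)"
        using that \<open>0 \<le> L\<close> by (simp add: mult_left_mono)
      then show ?thesis
        using close mult_left_mono[of "exp (L * t)" "exp (L * Te)" "\<bar>d 0\<bar>"] by (simp add: d_def)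
    qed
    fix t assume t: "t \<in> {0..Te}" and small: "\<And>r. r \<in> {0..t} \<Longrightarrow> \<bar>d r\<bar> \<le> 1"
    show "\<bar>d t\<bar> \<le> \<bar>d 0\<bar> * exp (L * t)"
    proof (rule gronwall_abs[OF \<open>0 \<le> L\<close>, of t t])
      show "t \<in> {0..t}"
        using t by simp
    next
      fix r assume r: "r \<in> {0..t}"
      then have "r \<in> {0..Te}"
        using t by auto
      then show "(d has_real_derivative F r (Y r) - F r (X r)) (at r within {0..t})"
        using has_field_derivative_subset[OF d[OF \<open>r \<in> {0..Te}\<close>]] t by auto
      show "\<bar>F r (Y r) - F r (X r)\<bar> \<le> L * \<bar>d r\<bar>"
        using lip[OF \<open>r \<in> {0..Te}\<close>, of "Y r"] small[OF r] by (simp add: d_def)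
    qed
  qed (use assms(2) in \<open>auto intro!: continuous_intros\<close>)
  then show ?thesis
    using assms(2) by (auto simp: d_def)
qed

lemma lipschitz_near_continuous_curve:
  fixes F Fx :: "real \<Rightarrow> real \<Rightarrow> real" and Z :: "real \<Rightarrow> real"
  assumes Z: "continuous_on {0..Te} Z"
    and F: "\<And>t x. t \<in> {0..Te} \<Longrightarrow> (F t has_real_derivative Fx t x) (at x)"
    and Fx_cont: "continuous_on ({0..Te} \<times> UNIV) (\<lambda>p. Fx (fst p) (snd p))"
  obtains L where "0 < L"
    and "\<And>s y. s \<in> {0..Te} \<Longrightarrow> \<bar>y - Z s\<bar> \<le> 1 \<Longrightarrow> \<bar>F s y - F s (Z s)\<bar> \<le> L * \<bar>y - Z s\<bar>"
proof -
  have "bounded (Z ` {0..Te})"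
    by (intro compact_imp_bounded compact_continuous_image Z compact_Icc)
  then obtain M where "\<forall>x \<in> Z ` {0..Te}. norm x \<le> M"
    unfolding bounded_iff by blast
  then have M: "\<And>s. s \<in> {0..Te} \<Longrightarrow> \<bar>Z s\<bar> \<le> M"
    by simp
  have "bounded ((\<lambda>p. Fx (fst p) (snd p)) ` ({0..Te} \<times> {- M - 1..M + 1}))"
    by (intro compact_imp_bounded compact_continuous_image continuous_on_subset[OF Fx_cont]
        compact_Times compact_Icc) auto
  then obtain L where "L > 0" and "\<forall>y \<in> (\<lambda>p. Fx (fst p) (snd p)) ` ({0..Te} \<times> {- M - 1..M + 1}). norm y \<le> L"
    unfolding bounded_pos by blast
  then have L: "\<And>s x. s \<in> {0..Te} \<Longrightarrow> x \<in> {- M - 1..M + 1} \<Longrightarrow> \<bar>Fx s x\<bar> \<le> L"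
    by force
  have "\<bar>F s y - F s (Z s)\<bar> \<le> L * \<bar>y - Z s\<bar>"
    if s: "s \<in> {0..Te}" and y: "\<bar>y - Z s\<bar> \<le> 1" for s y
  proof -
    have "y \<in> {- M - 1..M + 1}" "Z s \<in> {- M - 1..M + 1}"
      using M[OF s] y by (auto simp: abs_le_iff)
    then have "norm (F s y - F s (Z s)) \<le> L * norm (y - Z s)"
    proof (intro field_differentiable_bound[OF convex_real_interval(5)])
      fix z assume "z \<in> {- M - 1..M + 1}"
      show "(F s has_field_derivative Fx s z) (at z within {- M - 1..M + 1})"
        using F[OF s] by (rule has_field_derivative_at_within)
      show "norm (Fx s z) \<le> L"
        using L[OF s \<open>z \<in> {- M - 1..M + 1}\<close>] by simp
    qed
    then show ?thesis
      by simp
  qed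
  with \<open>L > 0\<close> show ?thesis
    using that by blast
qed

lemma ode_rhs_difference_le:
  fixes X F Fx :: "real \<Rightarrow> real \<Rightarrow> real"
  assumes X: "\<And>b t. t \<in> {0..Te} \<Longrightarrow> ((\<lambda>s. X s b) has_real_derivative F t (X t b)) (at t within {0..Te})"
    and X0: "\<And>b. X 0 b = b"
    and F: "\<And>t x. t \<in> {0..Te} \<Longrightarrow> (F t has_real_derivative Fx t x) (at x)"
    and Fx_cont: "continuous_on ({0..Te} \<times> UNIV) (\<lambda>p. Fx (fst p) (snd p))"
  obtains h0 K where "0 < h0"
    and "\<And>h s. 0 < h \<Longrightarrow> h \<le> h0 \<Longrightarrow> s \<in> {0..Te} \<Longrightarrow> \<bar>F s (X s (\<beta> + h)) - F s (X s \<beta>)\<bar> \<le> K * h"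
proof -
  obtain L where "0 < L" and lip: "\<And>s y. s \<in> {0..Te} \<Longrightarrow> \<bar>y - X s \<beta>\<bar> \<le> 1 \<Longrightarrow>
      \<bar>F s y - F s (X s \<beta>)\<bar> \<le> L * \<bar>y - X s \<beta>\<bar>"
    using lipschitz_near_continuous_curve[OF DERIV_continuous_on[OF X] F Fx_cont] by metis
  define h0 where "h0 = exp (- (L * Te)) / 2"
  have close: "h * exp (L * Te) \<le> 1 / 2" if "h \<le> h0" for h
    using that mult_right_mono[OF that, of "exp (L * Te)"] by (simp add: h0_def exp_minus)
  have "\<bar>F s (X s (\<beta> + h)) - F s (X s \<beta>)\<bar> \<le> (L * exp (L * Te)) * h"
    if h: "0 < h" "h \<le> h0" and s: "s \<in> {0..Te}" for h s
  proof -
    have "\<bar>X s (\<beta> + h) - X s \<beta>\<bar> \<le> \<bar>X 0 (\<beta> + h) - X 0 \<beta>\<bar> * exp (L * s)"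
      using \<open>L > 0\<close> close[OF h(2)] h(1)
      by (intro ode_solutions_dist_le[OF _ s X X lip]) (auto simp: X0)
    also have "\<dots> \<le> h * exp (L * Te)"
      using h(1) s \<open>L > 0\<close> by (simp add: X0)
    finally have dist: "\<bar>X s (\<beta> + h) - X s \<beta>\<bar> \<le> h * exp (L * Te)" .
    then have "\<bar>F s (X s (\<beta> + h)) - F s (X s \<beta>)\<bar> \<le> L * (h * exp (L * Te))"
      using lip[OF s, of "X s (\<beta> + h)"] close[OF h(2)] mult_left_mono[OF dist, of L] \<open>L > 0\<close>
      by linarith
    then show ?thesis
      by (simp add: algebra_simps)
  qed
  moreover have "0 < h0"
    by (simp add: h0_def)
  ultimately show ?thesis
    using that by blast
qed

lemma has_integral_of_has_real_derivative_within:
  fixes Y Y' :: "real \<Rightarrow> real"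
  assumes Y: "\<And>s. s \<in> {0..Te} \<Longrightarrow> (Y has_real_derivative Y' s) (at s within {0..Te})" and t: "t \<in> {0..Te}"
  shows "(Y' has_integral (Y t - Y 0)) {0..t}"
proof (rule fundamental_theorem_of_calculus)
  show "0 \<le> t"
    using t by simp
  fix s assume "s \<in> {0..t}"
  then have "(Y has_real_derivative Y' s) (at s within {0..t})"
    using t by (intro has_field_derivative_subset[OF Y]) auto
  then show "(Y has_vector_derivative Y' s) (at s within {0..t})"
    by (simp add: has_real_derivative_iff_has_vector_derivative)
qed

lemma filterlim_const_over_Suc:
  fixes c :: real
  assumes "0 < c"
  shows "filterlim (\<lambda>n. c / real (Suc n)) (at 0) sequentially"
proof (rule filterlim_atI)
  show "(\<lambda>n. c / real (Suc n)) \<longlonglongrightarrow> 0"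
    by (rule LIMSEQ_Suc[OF lim_const_over_n])
  show "\<forall>\<^sub>F n in sequentially. c / real (Suc n) \<noteq> 0"
    using assms by simp
qed

lemma ode_difference_quotient_has_integral:
  fixes X F :: "real \<Rightarrow> real \<Rightarrow> real"
  assumes X: "\<And>b t. t \<in> {0..Te} \<Longrightarrow> ((\<lambda>s. X s b) has_real_derivative F t (X t b)) (at t within {0..Te})"
    and X0: "\<And>b. X 0 b = b" and t: "t \<in> {0..Te}" and "h \<noteq> 0"
  shows "((\<lambda>s. (F s (X s (\<beta> + h)) - F s (X s \<beta>)) / h) has_integral ((X t (\<beta> + h) - X t \<beta>) / h - 1)) {0..t}"
proof -
  have "((\<lambda>s. F s (X s b)) has_integral (X t b - b)) {0..t}" for b
    using has_integral_of_has_real_derivative_within[OF X t] by (simp add: X0)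
  then have "((\<lambda>s. (F s (X s (\<beta> + h)) - F s (X s \<beta>)) / h) has_integral
      ((X t (\<beta> + h) - (\<beta> + h)) - (X t \<beta> - \<beta>)) / h) {0..t}"
    by (intro has_integral_divide has_integral_diff)
  moreover have "((X t (\<beta> + h) - (\<beta> + h)) - (X t \<beta> - \<beta>)) / h = (X t (\<beta> + h) - X t \<beta>) / h - 1"
    using \<open>h \<noteq> 0\<close> by (simp add: field_simps)
  ultimately show ?thesis
    by simp
qed

lemma ode_initial_value_derivative_integral_eq:
  fixes X F Fx :: "real \<Rightarrow> real \<Rightarrow> real" and C :: "real \<Rightarrow> real"
  assumes X: "\<And>b t. t \<in> {0..Te} \<Longrightarrow> ((\<lambda>s. X s b) has_real_derivative F t (X t b)) (at t within {0..Te})"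
    and X0: "\<And>b. X 0 b = b"
    and F: "\<And>t x. t \<in> {0..Te} \<Longrightarrow> (F t has_real_derivative Fx t x) (at x)"
    and Fx_cont: "continuous_on ({0..Te} \<times> UNIV) (\<lambda>p. Fx (fst p) (snd p))"
    and C: "\<And>t. t \<in> {0..Te} \<Longrightarrow> ((\<lambda>b. X t b) has_real_derivative C t) (at \<beta>)"
    and t: "t \<in> {0..Te}"
  shows "C t = 1 + integral {0..t} (\<lambda>s. Fx s (X s \<beta>) * C s)"
proof -
  obtain K h0 where "0 < h0" and K: "\<And>h s. 0 < h \<Longrightarrow> h \<le> h0 \<Longrightarrow> s \<in> {0..Te} \<Longrightarrow>
      \<bar>F s (X s (\<beta> + h)) - F s (X s \<beta>)\<bar> \<le> K * h"
    using ode_rhs_difference_le[OF X X0 F Fx_cont] by metis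
  define h where "h n = h0 / real (Suc n)" for n
  have h: "0 < h n" "h n \<le> h0" for n
    using \<open>0 < h0\<close> by (auto simp: h_def divide_le_eq)
  have h_lim: "filterlim h (at 0) sequentially"
    unfolding h_def using \<open>0 < h0\<close> by (rule filterlim_const_over_Suc)
  define g where "g n s = (F s (X s (\<beta> + h n)) - F s (X s \<beta>)) / h n" for n s
  have g_integral: "(g n has_integral ((X t (\<beta> + h n) - X t \<beta>) / h n - 1)) {0..t}" for n
    unfolding g_def[abs_def]
    by (rule ode_difference_quotient_has_integral[OF X X0 t less_imp_neq[OF h(1), symmetric]])
  have g_bound: "\<forall>s\<in>{0..t}. norm (g n s) \<le> K" for n
  proof
    fix s assume "s \<in> {0..t}"
    then have "\<bar>F s (X s (\<beta> + h n)) - F s (X s \<beta>)\<bar> \<le> K * h n"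
      using K[OF h] t by simp
    then show "norm (g n s) \<le> K"
      using h(1)[of n] by (simp add: g_def divide_le_eq)
  qed
  have g_lim: "\<forall>s\<in>{0..t}. (\<lambda>n. g n s) \<longlonglongrightarrow> Fx s (X s \<beta>) * C s"
  proof
    fix s assume "s \<in> {0..t}"
    then have "s \<in> {0..Te}"
      using t by auto
    then have "((\<lambda>k. (F s (X s (\<beta> + k)) - F s (X s \<beta>)) / k) \<longlongrightarrow> Fx s (X s \<beta>) * C s) (at 0)"
      using DERIV_chain2[OF F C, of s s] by (simp add: DERIV_def)
    then show "(\<lambda>n. g n s) \<longlonglongrightarrow> Fx s (X s \<beta>) * C s"
      unfolding g_def by (rule filterlim_compose[OF _ h_lim])
  qed
  have "(\<lambda>n. (X t (\<beta> + h n) - X t \<beta>) / h n) \<longlonglongrightarrow> C t"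
    using C[OF t] unfolding DERIV_def by (rule filterlim_compose[OF _ h_lim])
  then have "(\<lambda>n. (X t (\<beta> + h n) - X t \<beta>) / h n - 1) \<longlonglongrightarrow> C t - 1"
    by (rule tendsto_diff) simp
  then have "((\<lambda>s. Fx s (X s \<beta>) * C s) has_integral (C t - 1)) {0..t}"
    by (rule has_integral_dominated_convergence[OF g_integral integrable_const_ivl g_bound g_lim])
  then show ?thesis
    by (simp add: integral_unique)
qed

lemma ode_initial_value_derivative_has_derivative:
  fixes X F Fx :: "real \<Rightarrow> real \<Rightarrow> real" and C :: "real \<Rightarrow> real"
  assumes X: "\<And>b t. t \<in> {0..Te} \<Longrightarrow> ((\<lambda>s. X s b) has_real_derivative F t (X t b)) (at t within {0..Te})"
    and X0: "\<And>b. X 0 b = b"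
    and F: "\<And>t x. t \<in> {0..Te} \<Longrightarrow> (F t has_real_derivative Fx t x) (at x)"
    and Fx_cont: "continuous_on ({0..Te} \<times> UNIV) (\<lambda>p. Fx (fst p) (snd p))"
    and C: "\<And>t. t \<in> {0..Te} \<Longrightarrow> ((\<lambda>b. X t b) has_real_derivative C t) (at \<beta>)"
    and C_cont: "continuous_on {0..Te} C"
    and t: "t \<in> {0..Te}"
  shows "(C has_real_derivative Fx t (X t \<beta>) * C t) (at t within {0..Te})"
proof -
  have "continuous_on {0..Te} (\<lambda>s. (s, X s \<beta>))"
    by (intro continuous_on_Pair continuous_on_id DERIV_continuous_on[OF X])
  then have "continuous_on {0..Te} (\<lambda>s. Fx s (X s \<beta>))"
    using continuous_on_compose2[OF Fx_cont] by fastforce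
  then have "continuous_on {0..Te} (\<lambda>s. Fx s (X s \<beta>) * C s)"
    using C_cont by (rule continuous_on_mult)
  then have "((\<lambda>t. 1 + integral {0..t} (\<lambda>s. Fx s (X s \<beta>) * C s)) has_real_derivative
      Fx t (X t \<beta>) * C t) (at t within {0..Te})"
    using DERIV_add[OF DERIV_const integral_has_real_derivative[OF _ t]] by simp
  then show ?thesis
    unfolding has_field_derivative_def
    by (rule has_derivative_transform[OF t, rotated])
      (rule ode_initial_value_derivative_integral_eq[OF X X0 F Fx_cont C])
qed

lemma zero_before_slope_bound:
  fixes \<Phi> \<Phi>' :: "real \<Rightarrow> real"
  assumes "0 < m" "0 \<le> \<Phi> 0"
    and \<Phi>: "\<And>s. s \<in> {0..\<Phi> 0 / m} \<Longrightarrow> (\<Phi> has_real_derivative \<Phi>' s) (at s within {0..\<Phi> 0 / m})"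
    and \<Phi>'_le: "\<And>s. s \<in> {0..\<Phi> 0 / m} \<Longrightarrow> \<Phi>' s \<le> - m"
  shows "\<exists>t\<in>{0..\<Phi> 0 / m}. \<Phi> t = 0"
proof -
  define B where "B = \<Phi> 0 / m"
  have "0 \<le> B"
    using assms(1,2) by (simp add: B_def)
  obtain r where r: "r \<in> {0..B}" "\<Phi> B - \<Phi> 0 = \<Phi>' r * (B - 0)"
    using mvt_very_simple[OF \<open>0 \<le> B\<close>, of \<Phi> "\<lambda>s. (*) (\<Phi>' s)"] \<Phi>
    by (auto simp: B_def has_field_derivative_def)
  have "\<Phi>' r * B \<le> - m * B"
    using \<Phi>'_le[of r] r(1) \<open>0 \<le> B\<close> by (intro mult_right_mono) (auto simp: B_def)
  then have "\<Phi> B \<le> 0"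
    using r(2) assms(1) by (simp add: B_def)
  moreover have "continuous_on {0..B} \<Phi>"
    using \<Phi> unfolding B_def by (rule DERIV_continuous_on)
  ultimately show ?thesis
    using IVT2'[of \<Phi> B 0 0] \<open>0 \<le> B\<close> assms(2) unfolding B_def by auto
qed

section \<open>A comparison principle for transport equations\<close>

lemma C1_partials_has_derivative:
  assumes "C1_partials T u ut ux" "p \<in> {0..<T} \<times> UNIV"
  shows "((\<lambda>p. u (fst p) (snd p)) has_derivative (\<lambda>h. ut (fst p) (snd p) * fst h + ux (fst p) (snd p) * snd h))
    (at p within {0..<T} \<times> UNIV)"
  using assms unfolding C1_partials_def by (cases p) auto

lemma C1_partials_continuous:
  "C1_partials T u ut ux \<Longrightarrow> continuous_on ({0..<T} \<times> UNIV) (\<lambda>p. u (fst p) (snd p))"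
  unfolding continuous_on_eq_continuous_within
  by (blast intro: has_derivative_continuous C1_partials_has_derivative)

lemma C1_partials_uminus:
  assumes "C1_partials T u ut ux"
  shows "C1_partials T (\<lambda>t x. - u t x) (\<lambda>t x. - ut t x) (\<lambda>t x. - ux t x)"
  unfolding C1_partials_def
proof (intro conjI ballI allI)
  fix t x assume "t \<in> {0..<T}"
  with assms have "((\<lambda>p. u (fst p) (snd p)) has_derivative (\<lambda>h. ut t x * fst h + ux t x * snd h))
      (at (t, x) within {0..<T} \<times> UNIV)"
    unfolding C1_partials_def by blast
  from has_derivative_minus[OF this]
  show "((\<lambda>p. - u (fst p) (snd p)) has_derivative (\<lambda>h. - ut t x * fst h + - ux t x * snd h))
      (at (t, x) within {0..<T} \<times> UNIV)"
    by (simp add: algebra_simps)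
qed (use assms in \<open>auto simp: C1_partials_def intro: continuous_on_minus\<close>)

lemma C1_partials_has_real_derivative_x:
  assumes "C1_partials T u ut ux" "t \<in> {0..<T}"
  shows "(u t has_real_derivative ux t x) (at x)"
proof -
  have range: "range (\<lambda>x. (t, x)) \<subseteq> {0..<T} \<times> UNIV"
    using assms(2) by auto
  have "((\<lambda>x. (t, x)) has_derivative (\<lambda>h. (0, h))) (at x)"
    by (intro has_derivative_Pair derivative_intros)
  from has_derivative_in_compose2[OF C1_partials_has_derivative[OF assms(1)] range UNIV_I this]
  have "(u t has_derivative (\<lambda>h. ut t x * 0 + ux t x * h)) (at x)"
    by simp
  then show ?thesis
    by (simp add: has_field_derivative_def)
qed

lemma C1_partials_has_real_derivative_path:
  assumes "C1_partials T u ut ux" "s \<in> {0..<T}" "(y has_real_derivative v) (at s within {0..<T})"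
  shows "((\<lambda>s. u s (y s)) has_real_derivative ut s (y s) + ux s (y s) * v) (at s within {0..<T})"
proof -
  have "((\<lambda>s. (s, y s)) has_derivative (\<lambda>h. (h, v * h))) (at s within {0..<T})"
    using assms(3) unfolding has_field_derivative_def by (intro has_derivative_Pair derivative_intros)
  from has_derivative_in_compose2[OF C1_partials_has_derivative[OF assms(1)] _ assms(2) this]
  show ?thesis
    by (auto simp: has_real_derivative_iff_has_vector_derivative has_vector_derivative_def
        algebra_simps)
qed

lemma has_derivative_lower_bound_along_ray:
  fixes U :: "real \<times> real \<Rightarrow> real"
  assumes U: "(U has_derivative (\<lambda>h. a * fst h + b * snd h)) (at p within D)"
    and slope: "a + b * c \<le> 0" and "0 < \<delta>"
  obtains h where "0 < h" "\<And>\<tau>. \<tau> \<in> {0..h} \<Longrightarrow> p - (\<tau>, c * \<tau>) \<in> D \<Longrightarrow> U p - \<delta> * \<tau> \<le> U (p - (\<tau>, c * \<tau>))"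
proof -
  have "0 < 1 + \<bar>c\<bar>"
    by (simp add: add_pos_nonneg)
  define e where "e = \<delta> / (1 + \<bar>c\<bar>)"
  have "0 < e"
    using \<open>0 < \<delta>\<close> \<open>0 < 1 + \<bar>c\<bar>\<close> by (simp add: e_def)
  then obtain d where "0 < d" and d: "\<And>y. y \<in> D \<Longrightarrow> norm (y - p) < d \<Longrightarrow>
      norm (U y - U p - (a * fst (y - p) + b * snd (y - p))) \<le> e * norm (y - p)"
    using U unfolding has_derivative_within_alt by blast
  define h where "h = d / (2 * (1 + \<bar>c\<bar>))"
  have "U p - \<delta> * \<tau> \<le> U (p - (\<tau>, c * \<tau>))" if "\<tau> \<in> {0..h}" "p - (\<tau>, c * \<tau>) \<in> D" for \<tau>
  proof -
    have "norm (p - (\<tau>, c * \<tau>) - p) \<le> \<tau> + \<bar>c\<bar> * \<tau>"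
      using norm_Pair_le[of "- \<tau>" "- c * \<tau>"] that(1) by (simp add: abs_mult)
    also have "\<dots> = (1 + \<bar>c\<bar>) * \<tau>"
      by (simp add: algebra_simps)
    finally have norm_le: "norm (p - (\<tau>, c * \<tau>) - p) \<le> (1 + \<bar>c\<bar>) * \<tau>" .
    also have "\<dots> < d"
      using that(1) \<open>0 < d\<close> \<open>0 < 1 + \<bar>c\<bar>\<close> by (simp add: h_def field_simps)
    finally have "\<bar>U (p - (\<tau>, c * \<tau>)) - U p + \<tau> * (a + b * c)\<bar> \<le> e * norm (p - (\<tau>, c * \<tau>) - p)"
      using d[OF that(2)] by (simp add: algebra_simps)
    also have "\<dots> \<le> e * ((1 + \<bar>c\<bar>) * \<tau>)"
      using mult_left_mono[OF norm_le, of e] \<open>0 < e\<close> by simp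
    also have "\<dots> = \<delta> * \<tau>"
      using \<open>0 < 1 + \<bar>c\<bar>\<close> by (simp add: e_def)
    finally show ?thesis
      using slope that(1) mult_nonneg_nonpos[of \<tau> "a + b * c"] by (simp add: abs_le_iff)
  qed
  moreover have "0 < h"
    using \<open>0 < d\<close> \<open>0 < 1 + \<bar>c\<bar>\<close> by (simp add: h_def)
  ultimately show ?thesis
    using that by blast
qed

(* The level drops by delta per unit of time backwards; this slack is what allows the set to be
   followed down to time 0 by continuous induction. *)
definition backward_cone_superlevel ::
    "(real \<Rightarrow> real \<Rightarrow> real) \<Rightarrow> real \<Rightarrow> real \<Rightarrow> real \<Rightarrow> real \<Rightarrow> (real \<times> real) set" where
  "backward_cone_superlevel u K \<delta> t0 x0 =
     {(s, x). 0 \<le> s \<and> s \<le> t0 \<and> x0 - K * (t0 - s) \<le> x \<and> x \<le> x0 \<and> u t0 x0 - \<delta> * (t0 - s) \<le> u s x}"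

lemma compact_backward_cone_superlevel:
  assumes "continuous_on ({0..<T} \<times> UNIV) (\<lambda>p. u (fst p) (snd p))" "t0 < T" "0 \<le> K"
  shows "compact (backward_cone_superlevel u K \<delta> t0 x0)"
proof -
  define box where "box = {0..t0} \<times> {x0 - K * t0..x0}"
  have "box \<subseteq> {0..<T} \<times> UNIV"
    using assms(2) by (auto simp: box_def)
  then have "closed {p \<in> box. x0 - K * (t0 - fst p) \<le> snd p}"
    and "closed {p \<in> box. u t0 x0 - \<delta> * (t0 - fst p) \<le> u (fst p) (snd p)}"
    unfolding box_def
    by (intro continuous_on_closed_Collect_le continuous_intros closed_Times closed_atLeastAtMost
        continuous_on_subset[OF assms(1)]; simp)+
  moreover have "x0 - K * t0 \<le> x" if "0 \<le> s" "x0 - K * (t0 - s) \<le> x" for s x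
    using that mult_nonneg_nonneg[OF assms(3) that(1)] by (simp add: algebra_simps)
  then have "backward_cone_superlevel u K \<delta> t0 x0 =
      {p \<in> box. x0 - K * (t0 - fst p) \<le> snd p} \<inter> {p \<in> box. u t0 x0 - \<delta> * (t0 - fst p) \<le> u (fst p) (snd p)}"
    by (auto simp: backward_cone_superlevel_def box_def)
  moreover have "bounded box"
    by (simp add: box_def bounded_Times)
  ultimately show ?thesis
    by (metis (no_types, lifting) Int_lower1 bounded_subset closed_Int compact_eq_bounded_closed
        mem_Collect_eq subsetI)
qed

lemma backward_cone_superlevel_step_above_level:
  assumes u: "C1_partials T u ut ux" and "t0 < T" "0 \<le> K" "0 < \<delta>"
    and p: "(t1, x1) \<in> backward_cone_superlevel u K \<delta> t0 x0" "0 < t1"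
    and above: "u t0 x0 - \<delta> * (t0 - t1) < u t1 x1"
  shows "\<exists>h>0. \<forall>s\<in>{t1 - h..t1}. \<exists>x. (s, x) \<in> backward_cone_superlevel u K \<delta> t0 x0"
proof -
  have p': "t1 \<le> t0" "x0 - K * (t0 - t1) \<le> x1" "x1 \<le> x0"
    using p(1) by (auto simp: backward_cone_superlevel_def)
  have "continuous_on {0..<T} (\<lambda>s. (s, x1))"
    by (intro continuous_intros)
  then have "continuous_on {0..<T} (\<lambda>s. u s x1)"
    using continuous_on_compose2[OF C1_partials_continuous[OF u]] by fastforce
  then obtain h where "0 < h" and h: "\<And>s. s \<in> {0..<T} \<Longrightarrow> dist s t1 \<le> h \<Longrightarrow>
      dist (u s x1) (u t1 x1) < u t1 x1 - (u t0 x0 - \<delta> * (t0 - t1))"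
    using continuous_onE[of "{0..<T}" "\<lambda>s. u s x1" t1 "u t1 x1 - (u t0 x0 - \<delta> * (t0 - t1))"]
      above p'(1) p(2) \<open>t0 < T\<close> by auto
  have "(s, x1) \<in> backward_cone_superlevel u K \<delta> t0 x0" if s: "s \<in> {t1 - min h t1..t1}" for s
  proof -
    have "s \<in> {0..<T}" "dist s t1 \<le> h"
      using s p'(1) \<open>t0 < T\<close> by (auto simp: dist_real_def)
    then have "u t0 x0 - \<delta> * (t0 - t1) < u s x1"
      using h by (force simp: dist_real_def)
    moreover have "\<delta> * (t0 - t1) \<le> \<delta> * (t0 - s)" "K * (t0 - t1) \<le> K * (t0 - s)"
      using s \<open>0 < \<delta>\<close> \<open>0 \<le> K\<close> by (auto intro: mult_left_mono)
    ultimately show ?thesis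
      using s p' by (auto simp: backward_cone_superlevel_def)
  qed
  moreover have "0 < min h t1"
    using \<open>0 < h\<close> p(2) by simp
  ultimately show ?thesis
    by blast
qed

lemma backward_cone_superlevel_step_on_level:
  assumes u: "C1_partials T u ut ux" and "t0 < T" "0 \<le> K" "0 < \<delta>"
    and pde: "\<And>t x. t \<in> {0..t0} \<Longrightarrow> x \<le> x0 \<Longrightarrow> u t x \<in> {u t0 x0 - \<delta> * t0..u t0 x0} \<Longrightarrow>
        ut t x + a t x * ux t x = 0 \<and> a t x \<in> {0..K}"
    and p: "(t1, x1) \<in> backward_cone_superlevel u K \<delta> t0 x0" "0 < t1"
    and on_level: "u t1 x1 = u t0 x0 - \<delta> * (t0 - t1)"
  shows "\<exists>h>0. \<forall>s\<in>{t1 - h..t1}. \<exists>x. (s, x) \<in> backward_cone_superlevel u K \<delta> t0 x0"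
proof -
  have p': "t1 \<le> t0" "x0 - K * (t0 - t1) \<le> x1" "x1 \<le> x0"
    using p(1) by (auto simp: backward_cone_superlevel_def)
  have "u t1 x1 \<in> {u t0 x0 - \<delta> * t0..u t0 x0}"
    using on_level p'(1) p(2) \<open>0 < \<delta>\<close> by auto
  then have speed: "ut t1 x1 + a t1 x1 * ux t1 x1 = 0" "a t1 x1 \<in> {0..K}"
    using pde[of t1 x1] p' p(2) by auto
  \<comment> \<open>c is chosen so that u does not decrease to first order when moving backwards along (1, c).\<close>
  define c where "c = (if 0 \<le> ux t1 x1 then 0 else K)"
  have "c \<in> {0..K}"
    using \<open>0 \<le> K\<close> by (simp add: c_def)
  have "ut t1 x1 + ux t1 x1 * c = ux t1 x1 * (c - a t1 x1)"
    using speed(1) by (simp add: algebra_simps)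
  also have "\<dots> \<le> 0"
    using speed(2) by (auto simp: c_def mult_le_0_iff)
  finally obtain h where "0 < h" and h: "\<And>\<tau>. \<tau> \<in> {0..h} \<Longrightarrow> (t1, x1) - (\<tau>, c * \<tau>) \<in> {0..<T} \<times> UNIV \<Longrightarrow>
      u t1 x1 - \<delta> * \<tau> \<le> u (t1 - \<tau>) (x1 - c * \<tau>)"
    using has_derivative_lower_bound_along_ray[OF
        C1_partials_has_derivative[OF u, of "(t1, x1)"] _ \<open>0 < \<delta>\<close>] p'(1) p(2) \<open>t0 < T\<close>
    by auto
  have "(s, x1 - c * (t1 - s)) \<in> backward_cone_superlevel u K \<delta> t0 x0" if s: "s \<in> {t1 - min h t1..t1}" for s
  proof -
    have "u t0 x0 - \<delta> * (t0 - s) \<le> u s (x1 - c * (t1 - s))"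
      using h[of "t1 - s"] s on_level p'(1) \<open>t0 < T\<close> by (auto simp: algebra_simps)
    moreover have "c * (t1 - s) \<le> K * (t1 - s)" "0 \<le> c * (t1 - s)"
      using \<open>c \<in> {0..K}\<close> s by (auto intro: mult_right_mono)
    ultimately show ?thesis
      using s p' by (auto simp: backward_cone_superlevel_def algebra_simps)
  qed
  moreover have "0 < min h t1"
    using \<open>0 < h\<close> p(2) by simp
  ultimately show ?thesis
    by blast
qed

lemma backward_cone_superlevel_step:
  assumes u: "C1_partials T u ut ux" and "t0 < T" "0 \<le> K" "0 < \<delta>"
    and pde: "\<And>t x. t \<in> {0..t0} \<Longrightarrow> x \<le> x0 \<Longrightarrow> u t x \<in> {u t0 x0 - \<delta> * t0..u t0 x0} \<Longrightarrow>
        ut t x + a t x * ux t x = 0 \<and> a t x \<in> {0..K}"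
    and p: "(t1, x1) \<in> backward_cone_superlevel u K \<delta> t0 x0" "0 < t1"
  shows "\<exists>h>0. \<forall>s\<in>{t1 - h..t1}. \<exists>x. (s, x) \<in> backward_cone_superlevel u K \<delta> t0 x0"
proof (cases "u t0 x0 - \<delta> * (t0 - t1) < u t1 x1")
  case True
  then show ?thesis
    by (rule backward_cone_superlevel_step_above_level[OF assms(1-4) p])
next
  case False
  then have "u t1 x1 = u t0 x0 - \<delta> * (t0 - t1)"
    using p(1) by (auto simp: backward_cone_superlevel_def)
  then show ?thesis
    using backward_cone_superlevel_step_on_level[OF u \<open>t0 < T\<close> \<open>0 \<le> K\<close> \<open>0 < \<delta>\<close> pde p] by blast
qed

lemma transport_initial_value_ge:
  assumes u: "C1_partials T u ut ux" and "0 \<le> t0" "t0 < T" "0 \<le> K" "0 < \<delta>"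
    and pde: "\<And>t x. t \<in> {0..t0} \<Longrightarrow> x \<le> x0 \<Longrightarrow> u t x \<in> {u t0 x0 - \<delta> * t0..u t0 x0} \<Longrightarrow>
        ut t x + a t x * ux t x = 0 \<and> a t x \<in> {0..K}"
  shows "\<exists>x\<le>x0. u t0 x0 - \<delta> * t0 \<le> u 0 x"
proof -
  define Z where "Z = backward_cone_superlevel u K \<delta> t0 x0"
  define S where "S = (\<lambda>\<tau>. t0 - \<tau>) -` (fst ` Z)"
  have "compact Z"
    unfolding Z_def
    by (rule compact_backward_cone_superlevel[OF C1_partials_continuous[OF u] \<open>t0 < T\<close> \<open>0 \<le> K\<close>])
  then have "closed (fst ` Z)"
    by (intro compact_imp_closed compact_continuous_image continuous_on_fst continuous_on_id)
  then have "closed S"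
    unfolding S_def by (rule continuous_closed_vimage) (intro continuous_intros)
  have "{0..t0} \<subseteq> S"
  proof (rule closed_real_induction[OF \<open>closed S\<close>])
    have "(t0, x0) \<in> Z"
      using \<open>0 \<le> t0\<close> by (simp add: Z_def backward_cone_superlevel_def)
    then show "0 \<in> S"
      by (force simp: S_def)
  next
    fix \<tau> assume \<tau>: "0 \<le> \<tau>" "\<tau> < t0" "{0..\<tau>} \<subseteq> S"
    then obtain x1 where "(t0 - \<tau>, x1) \<in> Z"
      by (auto simp: S_def)
    moreover have "0 < t0 - \<tau>"
      using \<tau>(2) by simp
    ultimately obtain h where "0 < h" and h: "\<forall>s\<in>{t0 - \<tau> - h..t0 - \<tau>}. \<exists>x. (s, x) \<in> Z"
      using backward_cone_superlevel_step[OF u \<open>t0 < T\<close> \<open>0 \<le> K\<close> \<open>0 < \<delta>\<close> pde]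
      unfolding Z_def by blast
    have "{\<tau>..\<tau> + h} \<subseteq> S"
    proof
      fix s assume "s \<in> {\<tau>..\<tau> + h}"
      then have "t0 - s \<in> {t0 - \<tau> - h..t0 - \<tau>}"
        by auto
      then obtain x where "(t0 - s, x) \<in> Z"
        using h by blast
      then show "s \<in> S"
        by (force simp: S_def)
    qed
    then show "\<exists>h>0. {\<tau>..\<tau> + h} \<subseteq> S"
      using \<open>0 < h\<close> by blast
  qed
  then obtain x where "(0, x) \<in> Z"
    using \<open>0 \<le> t0\<close> by (force simp: S_def)
  then show ?thesis
    by (auto simp: Z_def backward_cone_superlevel_def)
qed

lemma transport_le_initial_bound:
  fixes u ut ux w :: "real \<Rightarrow> real \<Rightarrow> real" and k :: "real \<Rightarrow> real"
  assumes u: "C1_partials T u ut ux" and "0 \<le> t0" "t0 < T"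
    and k: "continuous_on UNIV k" "\<And>y. 0 \<le> k y"
    and pde: "\<And>t x. t \<in> {0..t0} \<Longrightarrow> x \<le> x0 \<Longrightarrow> ut t x + k (u t x + w t x) * ux t x = 0"
    and w: "\<And>t x. t \<in> {0..t0} \<Longrightarrow> x \<le> x0 \<Longrightarrow> w t x \<in> {wl..wh}"
    and init: "\<And>x. x \<le> x0 \<Longrightarrow> u 0 x \<le> A"
  shows "u t0 x0 \<le> A"
proof (rule ccontr)
  assume "\<not> u t0 x0 \<le> A"
  define \<delta> where "\<delta> = (u t0 x0 - A) / (2 * (t0 + 1))"
  have "0 < \<delta>"
    using \<open>\<not> u t0 x0 \<le> A\<close> \<open>0 \<le> t0\<close> by (simp add: \<delta>_def)
  have "\<delta> * t0 = (u t0 x0 - A) * (t0 / (2 * (t0 + 1)))"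
    by (simp add: \<delta>_def)
  also have "\<dots> < (u t0 x0 - A) * 1"
    using \<open>\<not> u t0 x0 \<le> A\<close> \<open>0 \<le> t0\<close> by (intro mult_strict_left_mono) auto
  finally have "\<delta> * t0 < u t0 x0 - A"
    by simp
  define I where "I = {u t0 x0 - \<delta> * t0 + wl..u t0 x0 + wh}"
  obtain K where "0 < K" and K: "\<And>y. y \<in> I \<Longrightarrow> k y \<le> K"
  proof -
    have "bounded (k ` I)"
      unfolding I_def by (intro compact_imp_bounded compact_continuous_image continuous_on_subset[OF k(1)]) auto
    then show ?thesis
      using that unfolding bounded_pos by force
  qed
  have "\<exists>x\<le>x0. u t0 x0 - \<delta> * t0 \<le> u 0 x"
  proof (rule transport_initial_value_ge[OF u \<open>0 \<le> t0\<close> \<open>t0 < T\<close> less_imp_le[OF \<open>0 < K\<close>] \<open>0 < \<delta>\<close>])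
    fix t x assume "t \<in> {0..t0}" "x \<le> x0" "u t x \<in> {u t0 x0 - \<delta> * t0..u t0 x0}"
    then have "u t x + w t x \<in> I"
      using w[of t x] by (auto simp: I_def)
    then show "ut t x + k (u t x + w t x) * ux t x = 0 \<and> k (u t x + w t x) \<in> {0..K}"
      using pde[OF \<open>t \<in> {0..t0}\<close> \<open>x \<le> x0\<close>] K k(2) by auto
  qed
  then show False
    using init \<open>\<delta> * t0 < u t0 x0 - A\<close> by force
qed

section \<open>Solutions of system (D) along a backward characteristic\<close>

locale solution_D =
  fixes T :: real and r0 :: "real \<Rightarrow> real" and r rt rx l lt lx x2 c2 :: "real \<Rightarrow> real \<Rightarrow> real"
  assumes r_C1: "C1_partials T r rt rx" and l_C1: "C1_partials T l lt lx"
    and r_pde: "\<And>t x. t \<in> {0..<T} \<Longrightarrow> rt t x + kf (r t x - l t x) * rx t x = 0"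
    and l_pde: "\<And>t x. t \<in> {0..<T} \<Longrightarrow> lt t x - kf (r t x - l t x) * lx t x = 0"
    and r_init: "\<And>x. r 0 x = r0 x"
    and l_init: "\<And>x. l 0 x = - r0 x"
    and x2_c2: "backward_char T r l x2 c2"
begin

lemma x2_0: "x2 0 b = b"
  using x2_c2 by (simp add: backward_char_def)

lemma x2_has_real_derivative:
  "t \<in> {0..<T} \<Longrightarrow> ((\<lambda>s. x2 s b) has_real_derivative - kf (r t (x2 t b) - l t (x2 t b))) (at t within {0..<T})"
  using x2_c2 by (simp add: backward_char_def)

lemma c2_has_real_derivative: "t \<in> {0..<T} \<Longrightarrow> (x2 t has_real_derivative c2 t b) (at b)"
  using x2_c2 by (simp add: backward_char_def)

lemma x2_antimono:
  assumes "0 \<le> s" "s \<le> t" "t < T"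
  shows "x2 t b \<le> x2 s b"
proof -
  have x2': "((\<lambda>s. x2 s b) has_derivative (*) (- kf (r \<tau> (x2 \<tau> b) - l \<tau> (x2 \<tau> b)))) (at \<tau> within {s..t})"
    if "s \<le> \<tau>" "\<tau> \<le> t" for \<tau>
    using has_field_derivative_subset[OF x2_has_real_derivative, of \<tau> "{s..t}"] that assms
    by (simp add: has_field_derivative_def subset_eq)
  then obtain \<tau> where "x2 t b - x2 s b = - kf (r \<tau> (x2 \<tau> b) - l \<tau> (x2 \<tau> b)) * (t - s)"
    using mvt_very_simple[OF \<open>s \<le> t\<close> x2'] by auto
  moreover have "0 \<le> kf (r \<tau> (x2 \<tau> b) - l \<tau> (x2 \<tau> b)) * (t - s)"
    using kf_ge_1 assms(2) by (simp add: order.trans[OF zero_le_one])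
  ultimately show ?thesis
    by simp
qed

lemma l_along_x2: "t \<in> {0..<T} \<Longrightarrow> l t (x2 t b) = - r0 b"
proof -
  have l': "((\<lambda>s. l s (x2 s b)) has_real_derivative 0) (at s within {0..<T})" if "s \<in> {0..<T}" for s
    using C1_partials_has_real_derivative_path[OF l_C1 that x2_has_real_derivative[OF that]] l_pde[OF that]
    by (simp add: algebra_simps)
  then obtain c where "\<forall>s\<in>{0..<T}. l s (x2 s b) = c"
    using has_field_derivative_zero_constant[of "{0..<T}", OF _ l'] by auto
  moreover assume "t \<in> {0..<T}"
  ultimately show ?thesis
    by (metis atLeastLessThan_iff l_init order_refl x2_0 order.strict_trans1)
qed

lemma lx_mult_c2:
  assumes "t \<in> {0..<T}" "(r0 has_real_derivative r0') (at \<beta>)"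
  shows "lx t (x2 t \<beta>) * c2 t \<beta> = - r0'"
proof -
  have "((\<lambda>b. l t (x2 t b)) has_real_derivative lx t (x2 t \<beta>) * c2 t \<beta>) (at \<beta>)"
    using DERIV_chain2[OF C1_partials_has_real_derivative_x[OF l_C1 assms(1)] c2_has_real_derivative[OF assms(1)]] .
  moreover have "((\<lambda>b. l t (x2 t b)) has_real_derivative - r0') (at \<beta>)"
    using DERIV_minus[OF assms(2)] by (simp add: l_along_x2[OF assms(1)])
  ultimately show ?thesis
    by (rule DERIV_unique)
qed

lemma neg_l_mem_image_r0:
  assumes "t \<in> {0..<T}" "x \<le> x2 t \<beta>"
  shows "- l t x \<in> r0 ` {..\<beta>}"
proof -
  have "x2 t x \<le> x" "x \<le> \<beta>"
    using x2_antimono[of 0 t] x2_0 assms by (auto intro: order.trans)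
  moreover have "continuous_on {x..\<beta>} (x2 t)"
    using c2_has_real_derivative[OF assms(1)] by (intro continuous_at_imp_continuous_on ballI DERIV_isCont)
  ultimately obtain b where "b \<in> {x..\<beta>}" "x2 t b = x"
    using IVT'[of "x2 t" x x \<beta>] assms(2) by auto
  then show ?thesis
    using l_along_x2[OF assms(1), of b] by force
qed

lemma r_along_x2_mem:
  assumes "t0 \<in> {0..<T}" "r0 ` {..\<beta>} \<subseteq> {a..b}"
  shows "r t0 (x2 t0 \<beta>) \<in> {a..b}"
proof -
  have kf_cont: "continuous_on UNIV kf"
    by (intro continuous_at_imp_continuous_on ballI isCont_kf)
  have kf_nonneg: "0 \<le> kf y" for y
    using kf_ge_1[of y] by simp
  have left: "t \<in> {0..<T} \<and> - l t x \<in> {a..b}" if "t \<in> {0..t0}" "x \<le> x2 t0 \<beta>" for t x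
  proof -
    have "t \<in> {0..<T}"
      using that assms(1) by auto
    moreover have "x \<le> x2 t \<beta>"
      using that x2_antimono[of t t0 \<beta>] assms(1) by auto
    ultimately show ?thesis
      using neg_l_mem_image_r0 assms(2) by blast
  qed
  have init: "r0 x \<in> {a..b}" if "x \<le> x2 t0 \<beta>" for x
  proof -
    have "x \<le> \<beta>"
      using that x2_antimono[of 0 t0 \<beta>] assms(1) by (simp add: x2_0)
    then show ?thesis
      using assms(2) by auto
  qed
  have t0: "0 \<le> t0" "t0 < T"
    using assms(1) by auto
  have "r t0 (x2 t0 \<beta>) \<le> b"
  proof (rule transport_le_initial_bound[OF r_C1 t0 kf_cont kf_nonneg, where w="\<lambda>t x. - l t x" and wl=a and wh=b])
    fix t x assume "t \<in> {0..t0}" "x \<le> x2 t0 \<beta>"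
    then show "rt t x + kf (r t x + - l t x) * rx t x = 0" "- l t x \<in> {a..b}"
      using r_pde left by auto
  qed (use init r_init in auto)
  \<comment> \<open>Since k is even, - r solves the transport equation with l in place of - l.\<close>
  moreover have "- r t0 (x2 t0 \<beta>) \<le> - a"
  proof (rule transport_le_initial_bound[OF C1_partials_uminus[OF r_C1] t0 kf_cont kf_nonneg,
        where w=l and wl="- b" and wh="- a"])
    fix t x assume "t \<in> {0..t0}" "x \<le> x2 t0 \<beta>"
    then have "t \<in> {0..<T}" "- l t x \<in> {a..b}"
      using left by auto
    then show "- rt t x + kf (- r t x + l t x) * - rx t x = 0" "l t x \<in> {- b..- a}"
      using r_pde[of t x] kf_minus[of "r t x - l t x"] by (auto simp: algebra_simps)
  qed (use init r_init in auto)
  ultimately show ?thesis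
    by simp
qed

lemma x2_continuous_on:
  assumes "Te < T"
  shows "continuous_on {0..Te} (\<lambda>s. x2 s b)"
proof -
  have "((\<lambda>s. x2 s b) has_real_derivative - kf (r s (x2 s b) - l s (x2 s b))) (at s within {0..Te})"
    if "s \<in> {0..Te}" for s
  proof (rule has_field_derivative_subset[OF x2_has_real_derivative])
    show "s \<in> {0..<T}" "{0..Te} \<subseteq> {0..<T}"
      using that assms by auto
  qed
  then show ?thesis
    by (rule DERIV_continuous_on)
qed

lemma c2_continuous_on:
  assumes "(r0 has_real_derivative r0') (at \<beta>)" "r0' \<noteq> 0" "Te < T"
  shows "continuous_on {0..Te} (\<lambda>s. c2 s \<beta>)"
proof -
  have sub: "{0..Te} \<subseteq> {0..<T}"
    using assms(3) by auto
  have "continuous_on {0..Te} (\<lambda>s. (s, x2 s \<beta>))"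
    by (intro continuous_on_Pair continuous_on_id x2_continuous_on assms(3))
  then have lx_cont: "continuous_on {0..Te} (\<lambda>s. lx s (x2 s \<beta>))"
    using continuous_on_compose2[of "{0..<T} \<times> UNIV" "\<lambda>p. lx (fst p) (snd p)"] l_C1 sub
    unfolding C1_partials_def by fastforce
  have lx_c2': "lx s (x2 s \<beta>) * c2 s \<beta> = - r0'" if "s \<in> {0..Te}" for s
    using lx_mult_c2[OF _ assms(1)] that sub by blast
  then have lx_nonzero: "lx s (x2 s \<beta>) \<noteq> 0" if "s \<in> {0..Te}" for s
    using lx_c2'[OF that] assms(2) by auto
  then have "continuous_on {0..Te} (\<lambda>s. - r0' / lx s (x2 s \<beta>))"
    by (intro continuous_on_divide continuous_on_const lx_cont) auto
  then show ?thesis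
    by (rule continuous_on_eq) (use lx_c2' lx_nonzero in \<open>simp add: field_simps\<close>)
qed

lemma continuous_on_speed_derivative:
  "continuous_on ({0..<T} \<times> UNIV)
    (\<lambda>p. dkf (r (fst p) (snd p) - l (fst p) (snd p)) * (rx (fst p) (snd p) - lx (fst p) (snd p)))"
proof -
  have "continuous_on UNIV dkf"
    by (intro continuous_at_imp_continuous_on ballI isCont_dkf)
  moreover have "continuous_on ({0..<T} \<times> UNIV) (\<lambda>p. r (fst p) (snd p) - l (fst p) (snd p))"
    by (intro continuous_on_diff C1_partials_continuous[OF r_C1] C1_partials_continuous[OF l_C1])
  ultimately have "continuous_on ({0..<T} \<times> UNIV) (\<lambda>p. dkf (r (fst p) (snd p) - l (fst p) (snd p)))"
    using continuous_on_compose2 by blast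
  moreover have "continuous_on ({0..<T} \<times> UNIV) (\<lambda>p. rx (fst p) (snd p) - lx (fst p) (snd p))"
    using r_C1 l_C1 unfolding C1_partials_def by (intro continuous_on_diff) auto
  ultimately show ?thesis
    by (rule continuous_on_mult)
qed

lemma c2_has_real_derivative_time:
  assumes r0': "(r0 has_real_derivative r0') (at \<beta>)" "r0' \<noteq> 0" and "Te < T" "t \<in> {0..Te}"
  shows "((\<lambda>s. c2 s \<beta>) has_real_derivative
      - (dkf (r t (x2 t \<beta>) - l t (x2 t \<beta>)) * (rx t (x2 t \<beta>) - lx t (x2 t \<beta>))) * c2 t \<beta>) (at t within {0..Te})"
proof -
  have sub: "{0..Te} \<subseteq> {0..<T}"
    using assms(3) by auto
  have x2': "((\<lambda>s. x2 s b) has_real_derivative - kf (r s (x2 s b) - l s (x2 s b))) (at s within {0..Te})"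
    if "s \<in> {0..Te}" for b s
    using has_field_derivative_subset[OF x2_has_real_derivative sub] sub that by blast
  have F': "((\<lambda>x. - kf (r s x - l s x)) has_real_derivative - (dkf (r s x - l s x) * (rx s x - lx s x))) (at x)"
    if "s \<in> {0..Te}" for s x
  proof -
    have "s \<in> {0..<T}"
      using that sub by auto
    from DERIV_diff[OF C1_partials_has_real_derivative_x[OF r_C1 this] C1_partials_has_real_derivative_x[OF l_C1 this]]
    show ?thesis
      by (rule DERIV_minus[OF DERIV_chain2[OF kf_has_real_derivative]])
  qed
  have "continuous_on ({0..Te} \<times> UNIV) (\<lambda>p. - (dkf (r (fst p) (snd p) - l (fst p) (snd p)) *
      (rx (fst p) (snd p) - lx (fst p) (snd p))))"
    using sub by (intro continuous_on_minus continuous_on_subset[OF continuous_on_speed_derivative]) auto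
  moreover have "(x2 s has_real_derivative c2 s \<beta>) (at \<beta>)" if "s \<in> {0..Te}" for s
    using c2_has_real_derivative that sub by blast
  ultimately show ?thesis
    using ode_initial_value_derivative_has_derivative[where X=x2 and F="\<lambda>s x. - kf (r s x - l s x)",
        OF x2' x2_0 F' _ _ c2_continuous_on[OF r0' assms(3)] assms(4)] by simp
qed

lemma c2_over_sqrt_kf_has_real_derivative:
  assumes r0': "(r0 has_real_derivative r0') (at \<beta>)" "r0' \<noteq> 0" and "Te < T" "t \<in> {0..Te}"
  shows "((\<lambda>s. c2 s \<beta> / sqrt (kf (r s (x2 s \<beta>) + r0 \<beta>))) has_real_derivative
      - ff (r t (x2 t \<beta>) + r0 \<beta>) * r0') (at t within {0..Te})"
proof -
  let ?\<eta> = "r t (x2 t \<beta>) + r0 \<beta>"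
  define p where "p = rx t (x2 t \<beta>)"
  define q where "q = lx t (x2 t \<beta>)"
  define k where "k = sqrt (kf ?\<eta>)"
  have t: "t \<in> {0..<T}" and sub: "{0..Te} \<subseteq> {0..<T}"
    using assms(3,4) by auto
  have "0 < kf ?\<eta>"
    using kf_ge_1[of ?\<eta>] by simp
  then have "0 < k" "kf ?\<eta> = k * k"
    by (simp_all add: k_def)
  have rt: "rt t (x2 t \<beta>) = - kf ?\<eta> * p"
    using r_pde[OF t, of "x2 t \<beta>"] by (simp add: l_along_x2[OF t] p_def algebra_simps)
  have "((\<lambda>s. r s (x2 s \<beta>)) has_real_derivative - 2 * kf ?\<eta> * p) (at t within {0..<T})"
    using C1_partials_has_real_derivative_path[OF r_C1 t x2_has_real_derivative[OF t]]
    by (rule DERIV_cong) (simp add: rt l_along_x2[OF t] p_def algebra_simps)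
  then have "((\<lambda>s. r s (x2 s \<beta>) + r0 \<beta>) has_real_derivative - 2 * kf ?\<eta> * p) (at t within {0..Te})"
    using DERIV_add[OF has_field_derivative_subset[OF _ sub] DERIV_const] by simp
  from DERIV_chain2[OF DERIV_real_sqrt[OF \<open>0 < kf ?\<eta>\<close>] DERIV_chain2[OF kf_has_real_derivative this]]
  have "((\<lambda>s. sqrt (kf (r s (x2 s \<beta>) + r0 \<beta>))) has_real_derivative
      inverse k / 2 * (dkf ?\<eta> * (- 2 * kf ?\<eta> * p))) (at t within {0..Te})"
    by (simp add: k_def)
  from DERIV_divide[OF c2_has_real_derivative_time[OF r0' assms(3,4)] this]
  have "((\<lambda>s. c2 s \<beta> / sqrt (kf (r s (x2 s \<beta>) + r0 \<beta>))) has_real_derivative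
      (- (dkf ?\<eta> * (p - q)) * c2 t \<beta> * k - c2 t \<beta> * (inverse k / 2 * (dkf ?\<eta> * (- 2 * kf ?\<eta> * p)))) /
      (k * k)) (at t within {0..Te})"
    using \<open>0 < k\<close> by (simp add: l_along_x2[OF t] k_def p_def q_def)
  moreover have "(- (dkf ?\<eta> * (p - q)) * c2 t \<beta> * k - c2 t \<beta> * (inverse k / 2 * (dkf ?\<eta> * (- 2 * kf ?\<eta> * p)))) /
      (k * k) = dkf ?\<eta> / k * (q * c2 t \<beta>)"
    unfolding \<open>kf ?\<eta> = k * k\<close> using \<open>0 < k\<close> by (simp add: field_simps)
  ultimately show ?thesis
    using lx_mult_c2[OF t r0'(1)] by (simp add: ff_eq k_def q_def)
qed

lemma c2_zero_before:
  assumes r0': "(r0 has_real_derivative r0') (at \<beta>)"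
    and "0 < m" and slope: "\<And>t. t \<in> {0..<T} \<Longrightarrow> m \<le> ff (r t (x2 t \<beta>) + r0 \<beta>) * r0'"
    and "1 / (sqrt (kf (2 * r0 \<beta>)) * m) < T"
  shows "\<exists>t\<in>{0..1 / (sqrt (kf (2 * r0 \<beta>)) * m)}. c2 t \<beta> = 0"
proof -
  define B where "B = 1 / (sqrt (kf (2 * r0 \<beta>)) * m)"
  define \<Phi> where "\<Phi> s = c2 s \<beta> / sqrt (kf (r s (x2 s \<beta>) + r0 \<beta>))" for s
  have "0 < B"
    using kf_ge_1[of "2 * r0 \<beta>"] \<open>0 < m\<close> by (simp add: B_def)
  then have "0 \<in> {0..<T}"
    using assms(4) unfolding B_def[symmetric] by simp
  have "(x2 0 has_real_derivative 1) (at \<beta>)"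
    using DERIV_ident by (simp add: x2_0[abs_def])
  then have "c2 0 \<beta> = 1"
    using DERIV_unique[OF c2_has_real_derivative[OF \<open>0 \<in> {0..<T}\<close>]] by blast
  then have \<Phi>0: "\<Phi> 0 / m = B"
    by (simp add: \<Phi>_def B_def x2_0 r_init)
  have "r0' \<noteq> 0"
    using slope[OF \<open>0 \<in> {0..<T}\<close>] \<open>0 < m\<close> by auto
  have "\<exists>t\<in>{0..\<Phi> 0 / m}. \<Phi> t = 0"
  proof (rule zero_before_slope_bound[OF \<open>0 < m\<close>])
    show "0 \<le> \<Phi> 0"
      using \<Phi>0 \<open>0 < B\<close> \<open>0 < m\<close> by (simp add: field_simps)
    fix s assume "s \<in> {0..\<Phi> 0 / m}"
    then have s: "s \<in> {0..B}" "s \<in> {0..<T}"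
      using \<Phi>0 assms(4) by (auto simp: B_def)
    show "(\<Phi> has_real_derivative - ff (r s (x2 s \<beta>) + r0 \<beta>) * r0') (at s within {0..\<Phi> 0 / m})"
      unfolding \<Phi>0 unfolding \<Phi>_def[abs_def]
      using c2_over_sqrt_kf_has_real_derivative[OF r0' \<open>r0' \<noteq> 0\<close> _ s(1)] assms(4)
      by (simp add: B_def)
    show "- ff (r s (x2 s \<beta>) + r0 \<beta>) * r0' \<le> - m"
      using slope[OF s(2)] by simp
  qed
  then obtain t where "t \<in> {0..B}" "c2 t \<beta> / sqrt (kf (r t (x2 t \<beta>) + r0 \<beta>)) = 0"
    unfolding \<Phi>0 by (auto simp: \<Phi>_def)
  moreover have "0 < kf (r t (x2 t \<beta>) + r0 \<beta>)"
    using kf_ge_1 by (rule order.strict_trans2[OF zero_less_one])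
  ultimately show ?thesis
    unfolding B_def by auto
qed

end

section \<open>The blow-up time bound\<close>

lemma r0f_has_real_derivative:
  assumes "(w1 has_real_derivative w) (at x)"
  shows "(r0f w1 has_real_derivative - (sqrt (1 + (w1 x)\<^sup>2) * w)) (at x)"
  unfolding r0f_def[abs_def] using DERIV_minus[OF DERIV_chain2[OF Lf_has_real_derivative assms]] .

lemma bounded_range_r0f:
  assumes "bounded (range w1)"
  shows "bounded (range (r0f w1))"
proof -
  obtain M where M: "\<And>x. \<bar>w1 x\<bar> \<le> M"
    using assms unfolding bounded_iff by auto
  have "\<bar>r0f w1 x\<bar> \<le> Lf M" for x
    using M[of x] strict_mono_less_eq[OF strict_mono_Lf, of "w1 x" M]
      strict_mono_less_eq[OF strict_mono_Lf, of "- M" "w1 x"]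
    by (auto simp: r0f_def Lf_minus abs_le_iff)
  then show ?thesis
    unfolding bounded_iff by auto
qed

lemma Inf_abs_ff_pos:
  assumes "0 < \<epsilon>" "\<epsilon> \<le> S"
  shows "0 < Inf ((\<lambda>\<eta>. \<bar>ff \<eta>\<bar>) ` {\<epsilon>..S})"
proof -
  have "continuous_on {\<epsilon>..S} (\<lambda>\<eta>. \<bar>ff \<eta>\<bar>)"
    by (intro continuous_at_imp_continuous_on ballI continuous_intros isCont_ff)
  then obtain \<eta> where "\<eta> \<in> {\<epsilon>..S}" "\<And>y. y \<in> {\<epsilon>..S} \<Longrightarrow> \<bar>ff \<eta>\<bar> \<le> \<bar>ff y\<bar>"
    using continuous_attains_inf[of "{\<epsilon>..S}" "\<lambda>\<eta>. \<bar>ff \<eta>\<bar>"] assms(2) by auto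
  then have "Inf ((\<lambda>\<eta>. \<bar>ff \<eta>\<bar>) ` {\<epsilon>..S}) = \<bar>ff \<eta>\<bar>"
    by (intro cInf_eq_minimum) auto
  moreover have "ff \<eta> \<noteq> 0"
    using sgn_ff[of \<eta>] \<open>\<eta> \<in> {\<epsilon>..S}\<close> assms(1) by (auto simp: sgn_if split: if_splits)
  ultimately show ?thesis
    by simp
qed

lemma Inf_abs_ff_mult_le:
  assumes "sgn \<eta> = sgn q" "\<bar>\<eta>\<bar> \<in> {\<epsilon>..S}"
  shows "\<bar>q\<bar> * Inf ((\<lambda>\<eta>. \<bar>ff \<eta>\<bar>) ` {\<epsilon>..S}) \<le> ff \<eta> * q"
proof -
  have "\<bar>ff \<eta>\<bar> = \<bar>ff \<bar>\<eta>\<bar>\<bar>"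
    by (cases "0 \<le> \<eta>") (auto simp: ff_minus)
  then have "Inf ((\<lambda>\<eta>. \<bar>ff \<eta>\<bar>) ` {\<epsilon>..S}) \<le> \<bar>ff \<eta>\<bar>"
    using assms(2) by (auto intro!: cInf_lower bdd_belowI[of _ 0])
  moreover have "ff \<eta> * q = \<bar>ff \<eta>\<bar> * \<bar>q\<bar>"
    using assms(1) sgn_ff[of \<eta>] by (auto simp: abs_mult sgn_if mult_less_0_iff split: if_splits)
  ultimately show ?thesis
    by (simp add: mult.commute mult_left_mono)
qed

lemma pos_add_value_iff_pos:
  fixes g :: "real \<Rightarrow> real"
  assumes g: "continuous_on UNIV g" and nonzero: "\<And>y. y \<le> \<beta> \<Longrightarrow> g \<beta> + g y \<noteq> 0" and "x \<le> \<beta>"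
  shows "0 < g \<beta> + g x \<longleftrightarrow> 0 < g \<beta>"
proof -
  have cont: "continuous_on {x..\<beta>} (\<lambda>y. g \<beta> + g y)"
    by (intro continuous_intros continuous_on_subset[OF g]) auto
  have "\<not> (\<exists>y\<ge>x. y \<le> \<beta> \<and> g \<beta> + g y = 0)"
    using nonzero by auto
  then show ?thesis
    using IVT'[OF _ _ \<open>x \<le> \<beta>\<close> cont] IVT2'[OF _ _ \<open>x \<le> \<beta>\<close> cont] nonzero[of x] nonzero[of \<beta>] \<open>x \<le> \<beta>\<close>
    by (smt (verit))
qed

lemma separated_sums_sign_interval:
  fixes g :: "real \<Rightarrow> real"
  assumes g: "continuous_on UNIV g" "bounded (range g)" and "0 < \<epsilon>" and sep: "\<forall>x\<le>\<beta>. \<epsilon> < \<bar>g \<beta> + g x\<bar>"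
  defines "S \<equiv> Sup ((\<lambda>x. \<bar>g \<beta> + g x\<bar>) ` {..\<beta>})"
  obtains a b where "g ` {..\<beta>} \<subseteq> {a..b}"
    and "\<And>y. y \<in> {a..b} \<Longrightarrow> sgn (g \<beta> + y) = sgn (g \<beta>) \<and> \<bar>g \<beta> + y\<bar> \<in> {\<epsilon>..S}"
proof -
  obtain M where M: "\<And>x. \<bar>g x\<bar> \<le> M"
    using g(2) unfolding bounded_iff by auto
  have "bdd_above ((\<lambda>x. \<bar>g \<beta> + g x\<bar>) ` {..\<beta>})"
    by (rule bdd_aboveI2[where M="M + M"]) (rule order.trans[OF abs_triangle_ineq add_mono[OF M M]])
  then have le_S: "\<bar>g \<beta> + g x\<bar> \<le> S" if "x \<le> \<beta>" for x
    unfolding S_def using that by (intro cSup_upper) auto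
  have gt_eps: "\<epsilon> < \<bar>g \<beta> + g x\<bar>" if "x \<le> \<beta>" for x
    using sep that by blast
  then have same_sign: "0 < g \<beta> + g x \<longleftrightarrow> 0 < g \<beta>" if "x \<le> \<beta>" for x
    using pos_add_value_iff_pos[OF g(1) _ that] \<open>0 < \<epsilon>\<close> by force
  show ?thesis
  proof (cases "0 < g \<beta>")
    case True
    show ?thesis
    proof (rule that[of "\<epsilon> - g \<beta>" "S - g \<beta>"])
      have "g x \<in> {\<epsilon> - g \<beta>..S - g \<beta>}" if "x \<le> \<beta>" for x
        using gt_eps[OF that] le_S[OF that] same_sign[OF that] True by (simp add: abs_of_pos)
      then show "g ` {..\<beta>} \<subseteq> {\<epsilon> - g \<beta>..S - g \<beta>}"
        by auto
    qed (use True \<open>0 < \<epsilon>\<close> in auto)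
  next
    case False
    then have "g \<beta> < 0"
      using gt_eps[of \<beta>] \<open>0 < \<epsilon>\<close> by auto
    show ?thesis
    proof (rule that[of "- S - g \<beta>" "- \<epsilon> - g \<beta>"])
      have "g x \<in> {- S - g \<beta>..- \<epsilon> - g \<beta>}" if "x \<le> \<beta>" for x
      proof -
        have "g \<beta> + g x < 0"
          using same_sign[OF that] gt_eps[OF that] False \<open>0 < \<epsilon>\<close> by auto
        then show ?thesis
          using gt_eps[OF that] le_S[OF that] by (simp add: abs_of_neg)
      qed
      then show "g ` {..\<beta>} \<subseteq> {- S - g \<beta>..- \<epsilon> - g \<beta>}"
        by auto
    qed (use \<open>g \<beta> < 0\<close> \<open>0 < \<epsilon>\<close> in auto)
  qed
qed

lemma (in solution_D) c2_vanishes_before_bound: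
  assumes r0': "(r0 has_real_derivative r0') (at \<beta>)" "0 < r0' * r0 \<beta>" and "0 < \<epsilon>"
    and ab: "r0 ` {..\<beta>} \<subseteq> {a..b}"
    and sgn_ab: "\<And>y. y \<in> {a..b} \<Longrightarrow> sgn (r0 \<beta> + y) = sgn (r0 \<beta>) \<and> \<bar>r0 \<beta> + y\<bar> \<in> {\<epsilon>..S}"
  defines "B \<equiv> 1 / (sqrt (kf (2 * r0 \<beta>)) * \<bar>r0'\<bar> * Inf ((\<lambda>\<eta>. \<bar>ff \<eta>\<bar>) ` {\<epsilon>..S}))"
  shows "(\<exists>t\<in>{0..<T}. c2 t \<beta> = 0 \<and> t \<le> B) \<or> T \<le> B"
proof -
  define \<gamma> where "\<gamma> = Inf ((\<lambda>\<eta>. \<bar>ff \<eta>\<bar>) ` {\<epsilon>..S})"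
  have "sgn r0' = sgn (r0 \<beta>)" "r0' \<noteq> 0"
    using r0'(2) by (auto simp: zero_less_mult_iff)
  then have slope: "\<bar>r0'\<bar> * \<gamma> \<le> ff (r t (x2 t \<beta>) + r0 \<beta>) * r0'" if "t \<in> {0..<T}" for t
    using sgn_ab[OF r_along_x2_mem[OF that ab]] unfolding \<gamma>_def
    by (intro Inf_abs_ff_mult_le) (auto simp: add.commute)
  have "\<epsilon> \<le> S"
    using sgn_ab[of "r0 \<beta>"] ab by auto
  then have "0 < \<bar>r0'\<bar> * \<gamma>"
    using Inf_abs_ff_pos[OF \<open>0 < \<epsilon>\<close>] \<open>r0' \<noteq> 0\<close> by (simp add: \<gamma>_def)
  from c2_zero_before[OF r0'(1) this slope]
  have zero: "B < T \<Longrightarrow> \<exists>t\<in>{0..B}. c2 t \<beta> = 0"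
    by (simp add: B_def \<gamma>_def mult.assoc)
  show ?thesis
  proof (cases "T \<le> B")
    case False
    then obtain t where "t \<in> {0..B}" "c2 t \<beta> = 0"
      using zero by auto
    then show ?thesis
      using False by auto
  qed simp
qed

theorem mainTheorem10:
  fixes w0 w1 w2 :: "real \<Rightarrow> real" and rm \<beta> \<epsilon> T :: real
    and r l x2 c2 :: "real \<Rightarrow> real \<Rightarrow> real"
  assumes w0_d1: "\<forall>x. (w0 has_real_derivative w1 x) (at x)"
    and w0_d2: "\<forall>x. (w1 has_real_derivative w2 x) (at x)"
    and w2_cont: "continuous_on UNIV w2"
    and w1_bdd: "bounded (range w1)"
    and w1_nonconst: "\<exists>x y. w1 x \<noteq> w1 y"
    and lim_bot: "(r0f w1 \<longlongrightarrow> rm) at_bot"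
    and eps_pos: "\<epsilon> > 0"
    and sgn1: "sgn (deriv (r0f w1) \<beta> * (r0f w1 \<beta> + rm)) = 1"
    and sgn2: "sgn (deriv (r0f w1) \<beta> * r0f w1 \<beta>) = 1"
    and sep: "\<forall>x\<le>\<beta>. \<bar>r0f w1 \<beta> + r0f w1 x\<bar> > \<epsilon>"
    and T_pos: "T > 0"
    and sol: "solves_D T (r0f w1) r l"
    and char: "backward_char T r l x2 c2"
  shows "let S = Sup ((\<lambda>x. \<bar>r0f w1 \<beta> + r0f w1 x\<bar>) ` {..\<beta>});
             \<gamma> = Inf ((\<lambda>\<eta>. \<bar>ff \<eta>\<bar>) ` {\<epsilon>..S});
             B = 1 / (sqrt (kf (2 * r0f w1 \<beta>)) * \<bar>deriv (r0f w1) \<beta>\<bar> * \<gamma>)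
         in (\<exists>t\<in>{0..<T}. c2 t \<beta> = 0 \<and> t \<le> B) \<or> T \<le> B"
proof -
  define r0 r0' where "r0 = r0f w1" and "r0' = deriv r0 \<beta>"
  have r0_deriv: "(r0 has_real_derivative - (sqrt (1 + (w1 x)\<^sup>2) * w2 x)) (at x)" for x
    unfolding r0_def using w0_d2 r0f_has_real_derivative by blast
  then have "(r0 has_real_derivative r0') (at \<beta>)" "continuous_on UNIV r0"
    unfolding r0'_def using DERIV_imp_deriv[OF r0_deriv]
    by (auto intro!: continuous_at_imp_continuous_on DERIV_isCont)
  then obtain a b where "r0 ` {..\<beta>} \<subseteq> {a..b}" and "\<And>y. y \<in> {a..b} \<Longrightarrow>
      sgn (r0 \<beta> + y) = sgn (r0 \<beta>) \<and> \<bar>r0 \<beta> + y\<bar> \<in> {\<epsilon>..Sup ((\<lambda>x. \<bar>r0 \<beta> + r0 x\<bar>) ` {..\<beta>})}"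
    using separated_sums_sign_interval[OF _ bounded_range_r0f[OF w1_bdd] eps_pos sep] unfolding r0_def by blast
  have "0 < r0' * r0 \<beta>"
    using sgn2 by (simp add: r0'_def r0_def sgn_1_pos)
  obtain rt rx lt lx where "solution_D T r0 r rt rx l lt lx x2 c2"
    using sol char unfolding solves_D_def solution_D_def r0_def by blast
  then interpret solution_D T r0 r rt rx l lt lx x2 c2 .
  show ?thesis
    unfolding Let_def r0_def[symmetric] r0'_def[symmetric]
    by (rule c2_vanishes_before_bound) fact+
qed

end
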